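(* The area of the cusp triangle $T'=P_1'P_2'P_3'$ equals $\dfrac{27\sqrt3}{16}\,\dfrac{c^4}{ab}$, independent of $u$.
   Context: Let $a>b>0$ and $c>0$ with $c^2=a^2-b^2$. Let $\mathcal{E}$ be the ellipse $x^2/a^2+y^2/b^2=1$, parametrized by $P(t)=(a\cos t,b\sin t)$. Fix $u\in\mathbb{R}$ and let $M=(a\cos u,b\sin u)$. Let $\Delta_u(t)=(x_u(t),y_u(t))$, where $x_u(t)=\frac1a\big(c^2(1+\cos(t+u))\cos t-a^2\cos u\big)$ and $y_u(t)=\frac1b\big(c^2\cos t\sin(t+u)-c^2\sin t-a^2\sin u\big)$ (the negative pedal curve of $\mathcal{E}$ with respect to $M$). For $i=1,2,3$ let $t_i=-u/3-2\pi(i-1)/3$ and $P_i'=\Delta_u(t_i)$ (the cusps of $\Delta_u$). *)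

theory Defs
  imports Complex_Main
begin

text \<open>Negative pedal curve of the ellipse with respect to M = (a cos u, b sin u).\<close>
definition neg_pedal :: "real \<Rightarrow> real \<Rightarrow> real \<Rightarrow> real \<Rightarrow> real \<Rightarrow> real \<times> real" where
  "neg_pedal a b c u t =
     ((c^2 * (1 + cos (t + u)) * cos t - a^2 * cos u) / a,
      (c^2 * cos t * sin (t + u) - c^2 * sin t - a^2 * sin u) / b)"

definition cusp :: "real \<Rightarrow> real \<Rightarrow> real \<Rightarrow> real \<Rightarrow> nat \<Rightarrow> real \<times> real" where
  "cusp a b c u i = neg_pedal a b c u (- u / 3 - 2 * pi * (real i - 1) / 3)"

definition triangle_area :: "real \<times> real \<Rightarrow> real \<times> real \<Rightarrow> real \<times> real \<Rightarrow> real" where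
  "triangle_area P Q R =
     \<bar>(fst Q - fst P) * (snd R - snd P) - (fst R - fst P) * (snd Q - snd P)\<bar> / 2"

end

theory Submission
  imports Defs
begin

text \<open>At a cusp parameter t we have 3 t + u \<equiv> 0 (mod 2 pi), i.e. t + u \<equiv> -2 t, and the
  triple-angle formulas then show that the cusp is the image of the unit-circle point (cos t, sin t)
  under an axis-parallel affine map depending on u only, with determinant -9 c^4 / (4 a b).
  The three cusp parameters are 120 degrees apart, so the cusps are the image of an equilateral
  triangle inscribed in the unit circle, of area 3 sqrt 3 / 4.\<close>

lemma triangle_area_affine:
  "triangle_area (l * x1 + p, m * y1 + q) (l * x2 + p, m * y2 + q) (l * x3 + p, m * y3 + q)
     = \<bar>l * m\<bar> * triangle_area (x1, y1) (x2, y2) (x3, y3)"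
proof -
  have "(l * x2 - l * x1) * (m * y3 - m * y1) - (l * x3 - l * x1) * (m * y2 - m * y1)
      = (l * m) * ((x2 - x1) * (y3 - y1) - (x3 - x1) * (y2 - y1))"
    by (simp add: algebra_simps)
  then show ?thesis
    by (simp add: triangle_area_def abs_mult)
qed

lemma triangle_area_on_unit_circle:
  "triangle_area (cos t1, sin t1) (cos t2, sin t2) (cos t3, sin t3)
     = \<bar>sin (t2 - t1) + sin (t3 - t2) + sin (t1 - t3)\<bar> / 2"
  unfolding triangle_area_def by (simp add: sin_diff algebra_simps)

lemma triangle_area_equilateral_on_unit_circle:
  "triangle_area (cos t, sin t) (cos (t - 2 * pi / 3), sin (t - 2 * pi / 3))
     (cos (t - 4 * pi / 3), sin (t - 4 * pi / 3)) = 3 * sqrt 3 / 4"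
proof -
  have s120: "sin (2 * pi / 3) = sqrt 3 / 2"
    using sin_120' by (simp add: mult.commute)
  have "t - 2 * pi / 3 - t = - (2 * pi / 3)" "t - 4 * pi / 3 - (t - 2 * pi / 3) = - (2 * pi / 3)"
    "t - (t - 4 * pi / 3) = pi / 3 + pi"
    by simp_all
  then have "sin (t - 2 * pi / 3 - t) = - (sqrt 3 / 2)"
    "sin (t - 4 * pi / 3 - (t - 2 * pi / 3)) = - (sqrt 3 / 2)"
    "sin (t - (t - 4 * pi / 3)) = - (sqrt 3 / 2)"
    by (simp_all only: sin_minus s120 sin_periodic_pi sin_60)
  then show ?thesis
    unfolding triangle_area_on_unit_circle by (simp only:) simp
qed

lemma sin_treble_sin: "sin (3 * (x::real)) = 3 * sin x - 4 * sin x ^ 3"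
proof -
  have "sin (3 * x) = sin (2 * x + x)" by simp
  also have "\<dots> = 2 * sin x * cos x ^ 2 + (cos x ^ 2 - sin x ^ 2) * sin x"
    by (simp only: sin_add sin_double cos_double) (simp add: algebra_simps power2_eq_square)
  also have "\<dots> = 3 * sin x - 4 * sin x ^ 3"
    unfolding cos_squared_eq by (simp add: algebra_simps power2_eq_square power3_eq_cube)
  finally show ?thesis .
qed

lemma neg_pedal_at_cusp_parameter:
  fixes k :: int
  assumes "3 * t + u = 2 * pi * of_int k"
  shows "neg_pedal a b c u t
     = (3 * c^2 / (2 * a) * cos t + (c^2 / 2 - a^2) * cos u / a,
        - 3 * c^2 / (2 * b) * sin t + (c^2 / 2 - a^2) * sin u / b)"
proof -
  have u: "u = 2 * pi * of_int k - 3 * t" using assms by simp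
  have "t + u = 2 * pi * of_int k + (- (2 * t))" using u by simp
  then have "cos (t + u) = cos (2 * t)" "sin (t + u) = - sin (2 * t)"
    by (simp_all only: cos_add sin_add cos_int_2pin sin_int_2pin cos_minus sin_minus)
  then have tu: "cos (t + u) = 2 * cos t ^ 2 - 1" "sin (t + u) = - 2 * sin t * cos t"
    by (simp_all add: cos_double_cos sin_double)
  have "cos u = cos (3 * t)" "sin u = - sin (3 * t)"
    unfolding u by (simp_all add: cos_diff sin_diff)
  then have cu: "cos u = 4 * cos t ^ 3 - 3 * cos t" and su: "sin u = 4 * sin t ^ 3 - 3 * sin t"
    by (simp_all add: cos_treble_cos sin_treble_sin)
  have x: "c^2 * (1 + cos (t + u)) * cos t - a^2 * cos u
      = 3 * c^2 / 2 * cos t + (c^2 / 2 - a^2) * cos u"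
    unfolding tu cu by (simp add: algebra_simps power2_eq_square power3_eq_cube)
  have "c^2 * cos t * sin (t + u) = - 2 * c^2 * sin t * cos t ^ 2"
    unfolding tu by (simp add: power2_eq_square)
  then have "c^2 * cos t * sin (t + u) - c^2 * sin t = - 3 * c^2 / 2 * sin t + c^2 / 2 * sin u"
    unfolding cos_squared_eq su by (simp add: algebra_simps power2_eq_square power3_eq_cube)
  then have y: "c^2 * cos t * sin (t + u) - c^2 * sin t - a^2 * sin u
      = - 3 * c^2 / 2 * sin t + (c^2 / 2 - a^2) * sin u"
    by (simp add: algebra_simps)
  show ?thesis
    unfolding neg_pedal_def x y by (simp add: add_divide_distrib diff_divide_distrib)
qed

theorem proposition4p1:
  fixes a b c u :: real
  assumes "a > b" "b > 0" "c > 0" "c^2 = a^2 - b^2"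
  shows "triangle_area (cusp a b c u 1) (cusp a b c u 2) (cusp a b c u 3)
           = 27 * sqrt 3 / 16 * c^4 / (a * b)"
proof -
  define l where "l = 3 * c^2 / (2 * a)"
  define m where "m = - 3 * c^2 / (2 * b)"
  define p where "p = (c^2 / 2 - a^2) * cos u / a"
  define q where "q = (c^2 / 2 - a^2) * sin u / b"
  define t where "t i = - u / 3 - 2 * pi * (real i - 1) / 3" for i :: nat
  have cusp: "cusp a b c u i = (l * cos (t i) + p, m * sin (t i) + q)" for i
  proof -
    have "3 * t i + u = 2 * pi * of_int (1 - int i)"
      by (simp add: t_def field_simps)
    then show ?thesis
      unfolding cusp_def t_def[symmetric] l_def m_def p_def q_def
      by (rule neg_pedal_at_cusp_parameter)
  qed
  have "t 2 = t 1 - 2 * pi / 3" "t 3 = t 1 - 4 * pi / 3"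
    by (simp_all add: t_def)
  then have "triangle_area (cusp a b c u 1) (cusp a b c u 2) (cusp a b c u 3)
      = \<bar>l * m\<bar> * (3 * sqrt 3 / 4)"
    unfolding cusp triangle_area_affine by (simp add: triangle_area_equilateral_on_unit_circle)
  also have "\<bar>l * m\<bar> = 9 * c^4 / (4 * a * b)"
  proof -
    have "l * m = - (9 * c^4 / (4 * a * b))"
      using assms by (simp add: l_def m_def field_simps power4_eq_xxxx power2_eq_square)
    moreover have "9 * c^4 / (4 * a * b) > 0"
      using assms by simp
    ultimately show ?thesis by (metis abs_minus_cancel abs_of_pos)
  qed
  finally show ?thesis by simp
qed

end
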